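(* Let $A$ be a subalgebra of a $K$-algebra $E$, $\Delta\subseteq\mathrm{Der}_A(E)$, and let $S$ be a regular left Ore set of $E$ with $S\subseteq N_\Delta(E)_0$. Then: (1) $A\subseteq E\subseteq S^{-1}E$, and each $\delta\in\Delta$ extends (via $\delta(s^{-1}e)=s^{-1}\delta(e)$) to an element of $\mathrm{Der}_A(S^{-1}E)$; thus $\Delta\subseteq\mathrm{Der}_A(S^{-1}E)$. (2) $S$ is a regular left Ore set of $N_\Delta(E)$. (3) $N_\Delta(S^{-1}E)=S^{-1}N_\Delta(E)$. (4) For all $i\geq0$, $N_\Delta(S^{-1}E)_i=S^{-1}N_\Delta(E)_i$.
   Context: $\mathrm{Der}_A(E)$ is the set of derivations of $E$ that are $A$-module homomorphisms. For $i\ge1$, $\Delta^i=\{\delta_1\cdots\delta_i\mid\delta_j\in\Delta\}$; for an algebra $B$ with $\Delta$ acting by derivations, $N_\Delta(B)_i=\{b\in B\mid\Delta^{i+1}b=0\}$ ($i\ge0$) and $N_\Delta(B)=\bigcup_iN_\Delta(B)_i$. A regular left Ore set is a multiplicative set of non-zero-divisors satisfying the left Ore condition; $S^{-1}E$ is the corresponding left localization, and $S^{-1}N_\Delta(E)_i=\{s^{-1}n\mid s\in S,n\in N_\Delta(E)_i\}$. *)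

theory Defs
  imports Main
begin

text \<open>Rings are modelled as types of class ring_1 (the whole type is the ring).
  A K-algebra structure on a ring E is a ring homomorphism from the field K
  into the centre of E.\<close>

definition is_ring_hom :: "('a::ring_1 \<Rightarrow> 'b::ring_1) \<Rightarrow> bool" where
  "is_ring_hom f \<longleftrightarrow> f 1 = 1 \<and> (\<forall>x y. f (x + y) = f x + f y) \<and> (\<forall>x y. f (x * y) = f x * f y)"

definition K_algebra_map :: "('k::field \<Rightarrow> 'e::ring_1) \<Rightarrow> bool" where
  "K_algebra_map alg \<longleftrightarrow> is_ring_hom alg \<and> (\<forall>k x. alg k * x = x * alg k)"

definition subring :: "'e::ring_1 set \<Rightarrow> bool" where
  "subring B \<longleftrightarrow> 1 \<in> B \<and> (\<forall>x\<in>B. \<forall>y\<in>B. x + y \<in> B \<and> x * y \<in> B) \<and> (\<forall>x\<in>B. - x \<in> B)"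

definition subalgebra :: "('k::field \<Rightarrow> 'e::ring_1) \<Rightarrow> 'e set \<Rightarrow> bool" where
  "subalgebra alg B \<longleftrightarrow> subring B \<and> range alg \<subseteq> B"

definition Der :: "('k::field \<Rightarrow> 'e::ring_1) \<Rightarrow> 'e set \<Rightarrow> ('e \<Rightarrow> 'e) set" where
  "Der alg B = {\<delta>. (\<forall>x y. \<delta> (x + y) = \<delta> x + \<delta> y)
                 \<and> (\<forall>k x. \<delta> (alg k * x) = alg k * \<delta> x)
                 \<and> (\<forall>x y. \<delta> (x * y) = \<delta> x * y + x * \<delta> y)
                 \<and> (\<forall>a\<in>B. \<forall>x. \<delta> (a * x) = a * \<delta> x)}"

fun Dpow :: "('e \<Rightarrow> 'e) set \<Rightarrow> nat \<Rightarrow> ('e \<Rightarrow> 'e) set" where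
  "Dpow D 0 = {id}"
| "Dpow D (Suc i) = {\<delta> \<circ> d | \<delta> d. \<delta> \<in> D \<and> d \<in> Dpow D i}"

definition N_Delta_i :: "('e::ring_1 \<Rightarrow> 'e) set \<Rightarrow> nat \<Rightarrow> 'e set" where
  "N_Delta_i D i = {b. \<forall>d\<in>Dpow D (Suc i). d b = 0}"

definition N_Delta :: "('e::ring_1 \<Rightarrow> 'e) set \<Rightarrow> 'e set" where
  "N_Delta D = (\<Union>i. N_Delta_i D i)"

definition regular_left_Ore :: "'e::ring_1 set \<Rightarrow> 'e set \<Rightarrow> bool" where
  "regular_left_Ore R S \<longleftrightarrow> S \<subseteq> R \<and> 1 \<in> S \<and> (\<forall>s\<in>S. \<forall>t\<in>S. s * t \<in> S)
     \<and> (\<forall>s\<in>S. \<forall>r\<in>R. (s * r = 0 \<longrightarrow> r = 0) \<and> (r * s = 0 \<longrightarrow> r = 0))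
     \<and> (\<forall>s\<in>S. \<forall>r\<in>R. \<exists>s'\<in>S. \<exists>r'\<in>R. s' * r = r' * s)"

definition is_unit :: "'q::ring_1 \<Rightarrow> bool" where
  "is_unit x \<longleftrightarrow> (\<exists>y. y * x = 1 \<and> x * y = 1)"

definition uinv :: "'q::ring_1 \<Rightarrow> 'q" where
  "uinv x = (THE y. y * x = 1 \<and> x * y = 1)"

definition left_localization :: "'e::ring_1 set \<Rightarrow> ('e \<Rightarrow> 'q::ring_1) \<Rightarrow> bool" where
  "left_localization S \<phi> \<longleftrightarrow> is_ring_hom \<phi> \<and> inj \<phi> \<and> (\<forall>s\<in>S. is_unit (\<phi> s))
     \<and> (\<forall>q. \<exists>s\<in>S. \<exists>e. q = uinv (\<phi> s) * \<phi> e)"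

definition loc_set :: "'e::ring_1 set \<Rightarrow> ('e \<Rightarrow> 'q::ring_1) \<Rightarrow> 'e set \<Rightarrow> 'q set" where
  "loc_set S \<phi> N = {uinv (\<phi> s) * \<phi> n | s n. s \<in> S \<and> n \<in> N}"

definition ext_der :: "'e::ring_1 set \<Rightarrow> ('e \<Rightarrow> 'q::ring_1) \<Rightarrow> ('e \<Rightarrow> 'e) \<Rightarrow> 'q \<Rightarrow> 'q" where
  "ext_der S \<phi> \<delta> = (THE D. \<forall>s\<in>S. \<forall>e. D (uinv (\<phi> s) * \<phi> e) = uinv (\<phi> s) * \<phi> (\<delta> e))"

end

theory Submission
  imports Defs
begin

text \<open>
  Every \<open>\<delta> \<in> \<Delta>\<close> kills \<open>S\<close>, and as elements of \<open>S\<close> are regular, \<open>\<delta>\<close> also kills every \<open>r\<close>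
  with \<open>r s \<in> S\<close> for some \<open>s \<in> S\<close>. The Ore data witnessing an equality of fractions
  s^-1 e = t^-1 f consist of such elements, so s^-1 e \<mapsto> s^-1 \<delta>(e) is well defined, and the
  fraction calculus shows that it is again a derivation. Consequently each word in the extended
  derivations acts on fractions as s^-1 e \<mapsto> s^-1 d(e) for the corresponding word \<open>d\<close> in \<open>\<Delta>\<close>,
  which identifies the nilpotent parts of the localization. For the Ore property of \<open>N\<^sub>\<Delta>(E)\<close>:
  applying \<open>\<delta>\<close> to s' r = r' s gives s' \<delta>(r) = \<delta>(r') s, so by induction \<open>r'\<close> is killed by
  \<open>\<Delta>\<^sup>k\<close> whenever \<open>r\<close> is.
\<close>

lemma uinv_unit:
  fixes x :: "'a::ring_1"
  assumes "is_unit x"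
  shows "uinv x * x = 1" and "x * uinv x = 1"
proof -
  obtain y where y: "y * x = 1" "x * y = 1"
    using assms unfolding is_unit_def by blast
  have "uinv x = y"
    unfolding uinv_def
  proof (rule the_equality)
    fix z assume "z * x = 1 \<and> x * z = 1"
    then have "z = z * (x * y)" using y by simp
    also have "\<dots> = y" using \<open>z * x = 1 \<and> x * z = 1\<close> by (simp add: mult.assoc[symmetric])
    finally show "z = y" .
  qed (use y in simp)
  with y show "uinv x * x = 1" and "x * uinv x = 1" by simp_all
qed

lemma uinv_eqI:
  fixes x :: "'a::ring_1"
  assumes "is_unit x" and "y * x = 1"
  shows "uinv x = y"
proof -
  have "y = y * (x * uinv x)" using uinv_unit(2)[OF assms(1)] by simp
  also have "\<dots> = uinv x" using assms(2) by (simp add: mult.assoc[symmetric])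
  finally show ?thesis by simp
qed

lemma is_ring_hom_0: "is_ring_hom f \<Longrightarrow> f 0 = 0"
  unfolding is_ring_hom_def by (metis add_cancel_right_right add_0)

lemma Dpow_Suc_right: "Dpow D (Suc n) = {d \<circ> \<delta> | d \<delta>. d \<in> Dpow D n \<and> \<delta> \<in> D}"
proof (induction n)
  case (Suc n)
  have "Dpow D (Suc (Suc n)) = {\<delta> \<circ> (d \<circ> \<delta>') | \<delta> d \<delta>'. \<delta> \<in> D \<and> d \<in> Dpow D n \<and> \<delta>' \<in> D}"
    by (subst Dpow.simps, subst Suc) blast
  also have "\<dots> = {d \<circ> \<delta>' | d \<delta>'. d \<in> Dpow D (Suc n) \<and> \<delta>' \<in> D}"
    by (auto simp: o_assoc)
  finally show ?case .
qed auto

locale ring_derivation =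
  fixes \<delta> :: "'a::ring_1 \<Rightarrow> 'a"
  assumes add: "\<delta> (x + y) = \<delta> x + \<delta> y"
    and mult: "\<delta> (x * y) = \<delta> x * y + x * \<delta> y"
begin

lemma zero [simp]: "\<delta> 0 = 0"
  using add[of 0 0] by simp

lemma one [simp]: "\<delta> 1 = 0"
  using mult[of 1 1] by simp

lemma minus: "\<delta> (- x) = - \<delta> x"
  using add[of x "- x"] minus_unique[of "\<delta> x" "\<delta> (- x)"] by simp

lemma mult_const_left: "\<delta> a = 0 \<Longrightarrow> \<delta> (a * x) = a * \<delta> x"
  by (simp add: mult)

lemma mult_const_right: "\<delta> a = 0 \<Longrightarrow> \<delta> (x * a) = \<delta> x * a"
  by (simp add: mult)

end

lemma Der_eq:
  "Der alg B = {\<delta>. ring_derivation \<delta> \<and> (\<forall>k. \<delta> (alg k) = 0) \<and> (\<forall>b\<in>B. \<delta> b = 0)}"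
proof -
  have "\<delta> \<in> Der alg B \<longleftrightarrow> ring_derivation \<delta> \<and> (\<forall>k. \<delta> (alg k) = 0) \<and> (\<forall>b\<in>B. \<delta> b = 0)"
    for \<delta> :: "'a \<Rightarrow> 'a"
  proof
    assume \<delta>: "\<delta> \<in> Der alg B"
    then have der: "ring_derivation \<delta>"
      unfolding Der_def by (simp add: ring_derivation_def)
    have "\<delta> (alg k * 1) = alg k * \<delta> 1" "\<forall>b\<in>B. \<delta> (b * 1) = b * \<delta> 1" for k
      using \<delta> unfolding Der_def by blast+
    with der show "ring_derivation \<delta> \<and> (\<forall>k. \<delta> (alg k) = 0) \<and> (\<forall>b\<in>B. \<delta> b = 0)"
      by (simp add: ring_derivation.one)
  next
    assume "ring_derivation \<delta> \<and> (\<forall>k. \<delta> (alg k) = 0) \<and> (\<forall>b\<in>B. \<delta> b = 0)"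
    then show "\<delta> \<in> Der alg B"
      unfolding Der_def by (simp add: ring_derivation.add ring_derivation.mult ring_derivation.mult_const_left)
  qed
  then show ?thesis by blast
qed

definition Dpow_kernel :: "('a::zero \<Rightarrow> 'a) set \<Rightarrow> nat \<Rightarrow> 'a set" where
  "Dpow_kernel D k = {x. \<forall>d\<in>Dpow D k. d x = 0}"

lemma N_Delta_i_eq_Dpow_kernel: "N_Delta_i D i = Dpow_kernel D (Suc i)"
  by (simp add: N_Delta_i_def Dpow_kernel_def)

lemma N_Delta_eq_Union_Dpow_kernel: "N_Delta D = (\<Union>i. Dpow_kernel D (Suc i))"
  by (simp add: N_Delta_def N_Delta_i_eq_Dpow_kernel)

lemma Dpow_kernel_0 [simp]: "Dpow_kernel D 0 = {0}"
  by (simp add: Dpow_kernel_def)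

lemma N_Delta_i_0: "N_Delta_i D 0 = {x. \<forall>\<delta>\<in>D. \<delta> x = 0}"
  by (simp add: N_Delta_i_def)

lemma Dpow_kernel_Suc: "x \<in> Dpow_kernel D (Suc k) \<longleftrightarrow> (\<forall>\<delta>\<in>D. \<delta> x \<in> Dpow_kernel D k)"
  unfolding Dpow_kernel_def Dpow_Suc_right by fastforce

locale derivation_set =
  fixes \<Delta> :: "('a::ring_1 \<Rightarrow> 'a) set"
  assumes derivation: "\<delta> \<in> \<Delta> \<Longrightarrow> ring_derivation \<delta>"
begin

lemma zero_in_Dpow_kernel: "0 \<in> Dpow_kernel \<Delta> k"
  by (induction k) (simp_all add: Dpow_kernel_Suc ring_derivation.zero derivation)

lemma Dpow_kernel_add: "x \<in> Dpow_kernel \<Delta> k \<Longrightarrow> y \<in> Dpow_kernel \<Delta> k \<Longrightarrow> x + y \<in> Dpow_kernel \<Delta> k"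
  by (induction k arbitrary: x y) (simp_all add: Dpow_kernel_Suc ring_derivation.add derivation)

lemma Dpow_kernel_uminus: "x \<in> Dpow_kernel \<Delta> k \<Longrightarrow> - x \<in> Dpow_kernel \<Delta> k"
  by (induction k arbitrary: x) (simp_all add: Dpow_kernel_Suc ring_derivation.minus derivation)

lemma Dpow_kernel_Suc_mono: "x \<in> Dpow_kernel \<Delta> k \<Longrightarrow> x \<in> Dpow_kernel \<Delta> (Suc k)"
  by (induction k arbitrary: x) (simp_all add: Dpow_kernel_Suc ring_derivation.zero derivation)

lemma Dpow_kernel_mono: "k \<le> l \<Longrightarrow> Dpow_kernel \<Delta> k \<subseteq> Dpow_kernel \<Delta> l"
  by (induction l rule: dec_induct) (auto intro: Dpow_kernel_Suc_mono)

text \<open>With truncated subtraction the degree bound is junk when a factor has degree 0,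
  but then that factor is 0.\<close>
lemma Dpow_kernel_mult:
  "x \<in> Dpow_kernel \<Delta> a \<Longrightarrow> y \<in> Dpow_kernel \<Delta> b \<Longrightarrow> x * y \<in> Dpow_kernel \<Delta> (a + b - 1)"
proof (induction "a + b" arbitrary: a b x y rule: less_induct)
  case less
  show ?case
  proof (cases "a = 0 \<or> b = 0")
    case True
    with less.prems have "x * y = 0" by auto
    then show ?thesis by (simp add: zero_in_Dpow_kernel)
  next
    case False
    then obtain a' b' where ab: "a = Suc a'" "b = Suc b'" by (meson not0_implies_Suc)
    have "\<delta> (x * y) \<in> Dpow_kernel \<Delta> (a' + b')" if "\<delta> \<in> \<Delta>" for \<delta>
    proof -
      have "\<delta> x \<in> Dpow_kernel \<Delta> a'" "\<delta> y \<in> Dpow_kernel \<Delta> b'"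
        using less.prems ab that by (simp_all add: Dpow_kernel_Suc)
      then have "\<delta> x * y \<in> Dpow_kernel \<Delta> (a' + b')" "x * \<delta> y \<in> Dpow_kernel \<Delta> (a' + b')"
        using less.hyps[of a' b] less.hyps[of a b'] less.prems ab by simp_all
      then show ?thesis
        by (simp add: ring_derivation.mult derivation[OF that] Dpow_kernel_add)
    qed
    then show ?thesis using ab by (simp add: Dpow_kernel_Suc)
  qed
qed

lemma subring_N_Delta: "subring (N_Delta \<Delta>)"
proof -
  have "x + y \<in> N_Delta \<Delta> \<and> x * y \<in> N_Delta \<Delta>" if xy: "x \<in> N_Delta \<Delta>" "y \<in> N_Delta \<Delta>" for x y
  proof -
    obtain i j where x: "x \<in> Dpow_kernel \<Delta> (Suc i)" and y: "y \<in> Dpow_kernel \<Delta> (Suc j)"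
      using xy unfolding N_Delta_eq_Union_Dpow_kernel by blast
    have "x \<in> Dpow_kernel \<Delta> (Suc (i + j))" "y \<in> Dpow_kernel \<Delta> (Suc (i + j))"
      using Dpow_kernel_mono[of "Suc i" "Suc (i + j)"] Dpow_kernel_mono[of "Suc j" "Suc (i + j)"] x y
      by auto
    then have "x + y \<in> Dpow_kernel \<Delta> (Suc (i + j))"
      by (rule Dpow_kernel_add)
    moreover have "x * y \<in> Dpow_kernel \<Delta> (Suc (i + j))"
      using Dpow_kernel_mult[OF x y] by simp
    ultimately show ?thesis
      unfolding N_Delta_eq_Union_Dpow_kernel by blast
  qed
  moreover have "- x \<in> N_Delta \<Delta>" if "x \<in> N_Delta \<Delta>" for x
    using that Dpow_kernel_uminus unfolding N_Delta_eq_Union_Dpow_kernel by blast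
  moreover have "1 \<in> Dpow_kernel \<Delta> (Suc 0)"
    by (simp add: Dpow_kernel_Suc derivation ring_derivation.one)
  then have "1 \<in> N_Delta \<Delta>"
    unfolding N_Delta_eq_Union_Dpow_kernel by blast
  ultimately show ?thesis
    unfolding subring_def by blast
qed

lemma Dpow_kernel_Ore_numerator:
  assumes "s \<in> N_Delta_i \<Delta> 0" and "s' \<in> N_Delta_i \<Delta> 0"
    and "\<And>x. x * s = 0 \<Longrightarrow> x = 0"
  shows "s' * r = r' * s \<Longrightarrow> r \<in> Dpow_kernel \<Delta> k \<Longrightarrow> r' \<in> Dpow_kernel \<Delta> k"
proof (induction k arbitrary: r r')
  case 0
  then show ?case using assms(3) by simp
next
  case (Suc k)
  have "\<delta> r' \<in> Dpow_kernel \<Delta> k" if "\<delta> \<in> \<Delta>" for \<delta>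
  proof (rule Suc.IH)
    show "s' * \<delta> r = \<delta> r' * s"
      using arg_cong[OF Suc.prems(1), of \<delta>] derivation[OF that] assms(1,2) that
      by (simp add: N_Delta_i_0 ring_derivation.mult_const_left ring_derivation.mult_const_right)
    show "\<delta> r \<in> Dpow_kernel \<Delta> k"
      using Suc.prems(2) that by (simp add: Dpow_kernel_Suc)
  qed
  then show ?case by (simp add: Dpow_kernel_Suc)
qed

lemma regular_left_Ore_N_Delta:
  assumes Ore: "regular_left_Ore UNIV S" and S_const: "S \<subseteq> N_Delta_i \<Delta> 0"
  shows "regular_left_Ore (N_Delta \<Delta>) S"
  unfolding regular_left_Ore_def
proof (intro conjI ballI)
  show "S \<subseteq> N_Delta \<Delta>"
    using S_const unfolding N_Delta_def by blast
  show "1 \<in> S"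
    using Ore unfolding regular_left_Ore_def by blast
  show "s * t \<in> S" if "s \<in> S" "t \<in> S" for s t
    using Ore that unfolding regular_left_Ore_def by blast
  show "s * r = 0 \<longrightarrow> r = 0" "r * s = 0 \<longrightarrow> r = 0" if "s \<in> S" for s r
    using Ore that unfolding regular_left_Ore_def by blast+
  fix s r assume s: "s \<in> S" and r: "r \<in> N_Delta \<Delta>"
  obtain i where i: "r \<in> Dpow_kernel \<Delta> (Suc i)"
    using r unfolding N_Delta_eq_Union_Dpow_kernel by blast
  obtain s' r' where s': "s' \<in> S" and Ore_eq: "s' * r = r' * s"
    using Ore s unfolding regular_left_Ore_def by blast
  have s_regular: "x * s = 0 \<Longrightarrow> x = 0" for x
    using Ore s unfolding regular_left_Ore_def by blast
  have "r' \<in> Dpow_kernel \<Delta> (Suc i)"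
    using S_const s s' by (intro Dpow_kernel_Ore_numerator[OF _ _ s_regular Ore_eq i]) auto
  with s' Ore_eq show "\<exists>s'\<in>S. \<exists>r'\<in>N_Delta \<Delta>. s' * r = r' * s"
    unfolding N_Delta_eq_Union_Dpow_kernel by blast
qed

end

lemma loc_set_UN: "loc_set S \<phi> (\<Union>i. N i) = (\<Union>i. loc_set S \<phi> (N i))"
  by (auto simp: loc_set_def)

locale left_Ore_localization =
  fixes S :: "'e::ring_1 set" and \<phi> :: "'e \<Rightarrow> 'q::ring_1"
  assumes Ore: "regular_left_Ore UNIV S" and localization: "left_localization S \<phi>"
begin

abbreviation frac :: "'e \<Rightarrow> 'e \<Rightarrow> 'q" where
  "frac s e \<equiv> uinv (\<phi> s) * \<phi> e"

lemma one_in_S: "1 \<in> S"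
  and mult_in_S: "s \<in> S \<Longrightarrow> t \<in> S \<Longrightarrow> s * t \<in> S"
  and S_cancel_right: "s \<in> S \<Longrightarrow> x * s = 0 \<Longrightarrow> x = 0"
  and Ore_condition: "s \<in> S \<Longrightarrow> \<exists>s'\<in>S. \<exists>r'. s' * r = r' * s"
  using Ore unfolding regular_left_Ore_def by blast+

lemma inj_phi: "inj \<phi>"
  and is_ring_hom_phi: "is_ring_hom \<phi>"
  and frac_cases: "(\<And>s e. s \<in> S \<Longrightarrow> q = frac s e \<Longrightarrow> thesis) \<Longrightarrow> thesis"
  and is_unit_phi: "s \<in> S \<Longrightarrow> is_unit (\<phi> s)"
  using localization unfolding left_localization_def by blast+

lemma phi_add: "\<phi> (x + y) = \<phi> x + \<phi> y"
  and phi_mult: "\<phi> (x * y) = \<phi> x * \<phi> y"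
  and phi_1 [simp]: "\<phi> 1 = 1"
  using is_ring_hom_phi unfolding is_ring_hom_def by blast+

lemma phi_0 [simp]: "\<phi> 0 = 0"
  using is_ring_hom_0[OF is_ring_hom_phi] .

lemma phi_eq_iff [simp]: "\<phi> x = \<phi> y \<longleftrightarrow> x = y"
  using inj_phi by (simp add: inj_eq)

lemma uinv_phi_left: "s \<in> S \<Longrightarrow> uinv (\<phi> s) * \<phi> s = 1"
  and uinv_phi_right: "s \<in> S \<Longrightarrow> \<phi> s * uinv (\<phi> s) = 1"
  using uinv_unit[OF is_unit_phi] by blast+

lemma frac_1 [simp]: "frac 1 e = \<phi> e"
  using uinv_eqI[OF is_unit_phi[OF one_in_S], of 1] by simp

lemma uinv_phi_mult: "s \<in> S \<Longrightarrow> t \<in> S \<Longrightarrow> uinv (\<phi> (t * s)) = uinv (\<phi> s) * uinv (\<phi> t)"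
proof (rule uinv_eqI[OF is_unit_phi[OF mult_in_S]])
  assume "s \<in> S" "t \<in> S"
  then show "uinv (\<phi> s) * uinv (\<phi> t) * \<phi> (t * s) = 1"
    by (simp add: phi_mult mult.assoc uinv_phi_left flip: mult.assoc[of "uinv (\<phi> t)"])
qed

lemma phi_S_mult_left_cancel: "u \<in> S \<Longrightarrow> \<phi> u * a = \<phi> u * b \<Longrightarrow> a = b"
  by (metis mult.assoc mult_1 uinv_phi_left)

lemma phi_eq_0_iff [simp]: "\<phi> x = 0 \<longleftrightarrow> x = 0"
  using phi_eq_iff[of x 0] by simp

lemma phi_times_frac: "s \<in> S \<Longrightarrow> \<phi> (a * s) * frac s x = \<phi> (a * x)"
  by (simp add: phi_mult mult.assoc uinv_phi_right flip: mult.assoc[of "\<phi> s"])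

lemma frac_eqI:
  assumes "s \<in> S" "t \<in> S" "s' \<in> S" and "s' * t = r' * s" and "r' * x = s' * y"
  shows "frac s x = frac t y"
proof (rule phi_S_mult_left_cancel)
  show "s' * t \<in> S" using assms mult_in_S by blast
  have "\<phi> (s' * t) * frac s x = \<phi> (r' * s) * frac s x"
    by (simp only: assms(4))
  also have "\<dots> = \<phi> (s' * y)"
    by (simp only: phi_times_frac[OF assms(1)] assms(5))
  also have "\<dots> = \<phi> (s' * t) * frac t y"
    by (simp only: phi_times_frac[OF assms(2)])
  finally show "\<phi> (s' * t) * frac s x = \<phi> (s' * t) * frac t y" .
qed

lemma frac_eqD:
  assumes "s \<in> S" "t \<in> S" and "frac s e = frac t f"
  obtains s' r' where "s' \<in> S" "s' * t = r' * s" "r' * e = s' * f"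
proof -
  obtain s' r' where "s' \<in> S" "s' * t = r' * s"
    using Ore_condition[OF assms(1)] by blast
  moreover have "\<phi> (r' * e) = \<phi> (s' * f)"
    using phi_times_frac[OF assms(1), of r' e] phi_times_frac[OF assms(2), of s' f]
    by (simp only: assms(3) \<open>s' * t = r' * s\<close>)
  ultimately show thesis using that by (simp only: phi_eq_iff)
qed

lemma frac_expand: "s \<in> S \<Longrightarrow> a * s \<in> S \<Longrightarrow> frac s x = frac (a * s) (a * x)"
  using frac_eqI[of s "a * s" 1 a x "a * x"] one_in_S by simp

lemma frac_eq_0_iff: "s \<in> S \<Longrightarrow> frac s x = 0 \<longleftrightarrow> x = 0"
  using phi_times_frac[of s 1 x] by auto

lemma frac_eq_right_frac:
  assumes "s \<in> S" "t \<in> S" and "x * t = s * y"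
  shows "frac s x = \<phi> y * uinv (\<phi> t)"
proof -
  have "frac s x = uinv (\<phi> s) * \<phi> (x * t) * uinv (\<phi> t)"
    using uinv_phi_right[OF assms(2)] by (simp add: phi_mult mult.assoc)
  also have "\<dots> = (uinv (\<phi> s) * \<phi> s) * \<phi> y * uinv (\<phi> t)"
    by (simp add: assms(3) phi_mult mult.assoc)
  also have "\<dots> = \<phi> y * uinv (\<phi> t)"
    using uinv_phi_left[OF assms(1)] by simp
  finally show ?thesis .
qed

lemma frac_mult:
  assumes "s \<in> S" "t \<in> S" "s' \<in> S" and "s' * e = r' * t"
  shows "frac s e * frac t f = frac (s' * s) (r' * f)"
proof -
  have "frac s e * frac t f = uinv (\<phi> s) * (\<phi> e * uinv (\<phi> t)) * \<phi> f"
    by (simp add: mult.assoc)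
  also have "\<dots> = uinv (\<phi> s) * frac s' r' * \<phi> f"
    using frac_eq_right_frac[OF assms(3,2) assms(4)[symmetric]] by simp
  also have "\<dots> = frac (s' * s) (r' * f)"
    by (simp only: uinv_phi_mult[OF assms(1,3)]) (simp add: phi_mult mult.assoc)
  finally show ?thesis .
qed

definition lifts :: "('q \<Rightarrow> 'q) \<Rightarrow> ('e \<Rightarrow> 'e) \<Rightarrow> bool" where
  "lifts F f \<longleftrightarrow> (\<forall>s\<in>S. \<forall>e. F (frac s e) = frac s (f e))"

lemma lifts_unique: "lifts F f \<Longrightarrow> lifts G f \<Longrightarrow> F = G"
proof
  fix q assume "lifts F f" "lifts G f"
  obtain s e where "s \<in> S" "q = frac s e" by (rule frac_cases)
  with \<open>lifts F f\<close> \<open>lifts G f\<close> show "F q = G q" by (simp add: lifts_def)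
qed

lemma lifts_comp: "lifts F f \<Longrightarrow> lifts G g \<Longrightarrow> lifts (F \<circ> G) (f \<circ> g)"
  by (simp add: lifts_def)

lemma lifts_phi: "lifts F f \<Longrightarrow> F (\<phi> e) = \<phi> (f e)"
  using one_in_S by (metis frac_1 lifts_def)

lemma Dpow_lifts_down:
  assumes "\<And>\<delta>. \<delta> \<in> \<Delta> \<Longrightarrow> lifts (L \<delta>) \<delta>"
  shows "D \<in> Dpow (L ` \<Delta>) k \<Longrightarrow> \<exists>d\<in>Dpow \<Delta> k. lifts D d"
proof (induction k arbitrary: D)
  case 0
  then show ?case by (simp add: lifts_def)
next
  case (Suc k)
  then obtain \<delta> D' where "\<delta> \<in> \<Delta>" "D = L \<delta> \<circ> D'" "D' \<in> Dpow (L ` \<Delta>) k" by auto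
  with Suc.IH assms show ?case by (fastforce intro: lifts_comp)
qed

lemma Dpow_lifts_up:
  assumes "\<And>\<delta>. \<delta> \<in> \<Delta> \<Longrightarrow> lifts (L \<delta>) \<delta>"
  shows "d \<in> Dpow \<Delta> k \<Longrightarrow> \<exists>D\<in>Dpow (L ` \<Delta>) k. lifts D d"
proof (induction k arbitrary: d)
  case 0
  then show ?case by (simp add: lifts_def)
next
  case (Suc k)
  then obtain \<delta> d' where "\<delta> \<in> \<Delta>" "d = \<delta> \<circ> d'" "d' \<in> Dpow \<Delta> k" by auto
  with Suc.IH assms show ?case by (fastforce intro: lifts_comp)
qed

lemma Dpow_kernel_lifts:
  assumes "\<And>\<delta>. \<delta> \<in> \<Delta> \<Longrightarrow> lifts (L \<delta>) \<delta>"
  shows "Dpow_kernel (L ` \<Delta>) k = loc_set S \<phi> (Dpow_kernel \<Delta> k)"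
proof (intro set_eqI iffI)
  fix q assume q: "q \<in> Dpow_kernel (L ` \<Delta>) k"
  obtain s e where s: "s \<in> S" and q_eq: "q = frac s e" by (rule frac_cases)
  have "d e = 0" if d: "d \<in> Dpow \<Delta> k" for d
  proof -
    obtain D where "D \<in> Dpow (L ` \<Delta>) k" "lifts D d"
      using Dpow_lifts_up[OF assms d] by blast
    with q s have "frac s (d e) = 0"
      by (auto simp: Dpow_kernel_def lifts_def q_eq)
    then show ?thesis
      by (simp add: frac_eq_0_iff[OF s])
  qed
  with s q_eq show "q \<in> loc_set S \<phi> (Dpow_kernel \<Delta> k)"
    by (auto simp: loc_set_def Dpow_kernel_def)
next
  fix q assume "q \<in> loc_set S \<phi> (Dpow_kernel \<Delta> k)"
  then obtain s e where s: "s \<in> S" and e: "e \<in> Dpow_kernel \<Delta> k" and q_eq: "q = frac s e"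
    by (auto simp: loc_set_def)
  have "D q = 0" if D: "D \<in> Dpow (L ` \<Delta>) k" for D
  proof -
    obtain d where "d \<in> Dpow \<Delta> k" "lifts D d"
      using Dpow_lifts_down[OF assms D] by blast
    with e s show ?thesis by (auto simp: Dpow_kernel_def lifts_def q_eq)
  qed
  then show "q \<in> Dpow_kernel (L ` \<Delta>) k"
    by (simp add: Dpow_kernel_def)
qed

lemma N_Delta_i_lifts:
  "(\<And>\<delta>. \<delta> \<in> \<Delta> \<Longrightarrow> lifts (L \<delta>) \<delta>) \<Longrightarrow> N_Delta_i (L ` \<Delta>) i = loc_set S \<phi> (N_Delta_i \<Delta> i)"
  by (simp add: N_Delta_i_eq_Dpow_kernel Dpow_kernel_lifts)

lemma N_Delta_lifts:
  "(\<And>\<delta>. \<delta> \<in> \<Delta> \<Longrightarrow> lifts (L \<delta>) \<delta>) \<Longrightarrow> N_Delta (L ` \<Delta>) = loc_set S \<phi> (N_Delta \<Delta>)"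
  by (simp add: N_Delta_def N_Delta_i_lifts loc_set_UN)

end

locale Ore_derivation = left_Ore_localization S \<phi> + ring_derivation \<delta>
  for S :: "'e::ring_1 set" and \<phi> :: "'e \<Rightarrow> 'q::ring_1" and \<delta> :: "'e \<Rightarrow> 'e" +
  assumes vanishes_on_S: "s \<in> S \<Longrightarrow> \<delta> s = 0"
begin

lemma vanishes_on_left_factor:
  assumes "s \<in> S" and "r * s \<in> S"
  shows "\<delta> r = 0"
proof (rule S_cancel_right[OF assms(1)])
  show "\<delta> r * s = 0"
    using mult_const_right[OF vanishes_on_S[OF assms(1)], of r] vanishes_on_S[OF assms(2)] by simp
qed

lemma frac_derivation_cong:
  assumes s: "s \<in> S" and t: "t \<in> S" and "frac s e = frac t f"
  shows "frac s (\<delta> e) = frac t (\<delta> f)"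
proof -
  obtain s' r' where s': "s' \<in> S" and Ore_eq: "s' * t = r' * s" and num_eq: "r' * e = s' * f"
    using frac_eqD[OF s t assms(3)] .
  have "\<delta> r' = 0"
    using vanishes_on_left_factor[OF s] mult_in_S[OF s' t] Ore_eq by simp
  then have "r' * \<delta> e = s' * \<delta> f"
    using arg_cong[OF num_eq, of \<delta>] by (simp add: mult_const_left vanishes_on_S[OF s'])
  then show ?thesis
    by (rule frac_eqI[OF s t s' Ore_eq])
qed

lemma ex1_lifts: "\<exists>!D. lifts D \<delta>"
proof (rule ex_ex1I)
  have "\<forall>q. \<exists>r. \<forall>s\<in>S. \<forall>e. q = frac s e \<longrightarrow> r = frac s (\<delta> e)"
  proof
    fix q
    obtain t f where t: "t \<in> S" and q: "q = frac t f" by (rule frac_cases)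
    have "\<forall>s\<in>S. \<forall>e. q = frac s e \<longrightarrow> frac t (\<delta> f) = frac s (\<delta> e)"
      using frac_derivation_cong[OF t] q by simp
    then show "\<exists>r. \<forall>s\<in>S. \<forall>e. q = frac s e \<longrightarrow> r = frac s (\<delta> e)" ..
  qed
  then obtain D where "\<forall>q. \<forall>s\<in>S. \<forall>e. q = frac s e \<longrightarrow> D q = frac s (\<delta> e)"
    by (rule choice[THEN exE])
  then show "\<exists>D. lifts D \<delta>"
    unfolding lifts_def by blast
qed (rule lifts_unique)

lemma lifts_ext_der: "lifts (ext_der S \<phi> \<delta>) \<delta>"
  using theI'[OF ex1_lifts] by (simp add: ext_der_def lifts_def)

lemma ext_der_frac: "s \<in> S \<Longrightarrow> ext_der S \<phi> \<delta> (frac s e) = frac s (\<delta> e)"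
  using lifts_ext_der by (simp add: lifts_def)

lemma ext_der_phi: "ext_der S \<phi> \<delta> (\<phi> e) = \<phi> (\<delta> e)"
  by (rule lifts_phi[OF lifts_ext_der])

lemma ext_der_add: "ext_der S \<phi> \<delta> (q1 + q2) = ext_der S \<phi> \<delta> q1 + ext_der S \<phi> \<delta> q2"
proof -
  obtain s e where s: "s \<in> S" and q1: "q1 = frac s e" by (rule frac_cases)
  obtain t f where t: "t \<in> S" and q2: "q2 = frac t f" by (rule frac_cases)
  obtain s' r' where s': "s' \<in> S" and Ore_eq: "s' * t = r' * s"
    using Ore_condition[OF s] by blast
  define u where "u = s' * t"
  have u: "u \<in> S" "u = r' * s"
    using mult_in_S[OF s' t] Ore_eq by (simp_all add: u_def)
  have "\<delta> r' = 0"
    using vanishes_on_left_factor[OF s] u by simp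
  have frac_s: "frac s x = frac u (r' * x)" for x
    using frac_expand[OF s] u by simp
  have frac_t: "frac t x = frac u (s' * x)" for x
    using frac_expand[OF t] u_def u(1) by simp
  have "ext_der S \<phi> \<delta> (q1 + q2) = ext_der S \<phi> \<delta> (frac u (r' * e + s' * f))"
    unfolding q1 q2 frac_s frac_t by (simp add: phi_add distrib_left)
  also have "\<dots> = frac u (\<delta> (r' * e + s' * f))"
    by (rule ext_der_frac[OF u(1)])
  also have "\<dots> = frac u (r' * \<delta> e) + frac u (s' * \<delta> f)"
    using \<open>\<delta> r' = 0\<close> vanishes_on_S[OF s']
    by (simp add: add mult_const_left phi_add distrib_left)
  also have "\<dots> = frac s (\<delta> e) + frac t (\<delta> f)"
    by (simp only: frac_s frac_t)
  also have "\<dots> = ext_der S \<phi> \<delta> q1 + ext_der S \<phi> \<delta> q2"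
    by (simp only: q1 q2 ext_der_frac[OF s] ext_der_frac[OF t])
  finally show ?thesis .
qed

lemma ext_der_mult:
  "ext_der S \<phi> \<delta> (q1 * q2) = ext_der S \<phi> \<delta> q1 * q2 + q1 * ext_der S \<phi> \<delta> q2"
proof -
  obtain s e where s: "s \<in> S" and q1: "q1 = frac s e" by (rule frac_cases)
  obtain t f where t: "t \<in> S" and q2: "q2 = frac t f" by (rule frac_cases)
  obtain s' r' where s': "s' \<in> S" and Ore_eq: "s' * e = r' * t"
    using Ore_condition[OF t] by blast
  have "\<delta> r' * t = s' * \<delta> e"
    using arg_cong[OF Ore_eq, of \<delta>] vanishes_on_S[OF s'] vanishes_on_S[OF t]
    by (simp add: mult_const_left mult_const_right)
  then have swap_\<delta>: "\<phi> (\<delta> e) * uinv (\<phi> t) = frac s' (\<delta> r')"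
    using frac_eq_right_frac[OF s' t] by simp
  have swap: "\<phi> e * uinv (\<phi> t) = frac s' r'"
    using frac_eq_right_frac[OF s' t Ore_eq[symmetric]] by simp
  have "ext_der S \<phi> \<delta> (q1 * q2) = frac (s' * s) (\<delta> (r' * f))"
    unfolding q1 q2 frac_mult[OF s t s' Ore_eq] by (rule ext_der_frac[OF mult_in_S[OF s' s]])
  also have "\<dots> = uinv (\<phi> s) * frac s' (\<delta> r') * \<phi> f + uinv (\<phi> s) * frac s' r' * \<phi> (\<delta> f)"
    unfolding uinv_phi_mult[OF s s'] by (simp add: mult phi_add phi_mult distrib_left mult.assoc)
  also have "\<dots> = ext_der S \<phi> \<delta> q1 * q2 + q1 * ext_der S \<phi> \<delta> q2"
    unfolding q1 q2 ext_der_frac[OF s] ext_der_frac[OF t] swap_\<delta>[symmetric] swap[symmetric]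
    by (simp add: mult.assoc)
  finally show ?thesis .
qed

lemma ring_derivation_ext_der: "ring_derivation (ext_der S \<phi> \<delta>)"
  by unfold_locales (fact ext_der_add ext_der_mult)+

lemma ext_der_in_Der: "\<delta> \<in> Der alg B \<Longrightarrow> ext_der S \<phi> \<delta> \<in> Der (\<phi> \<circ> alg) (\<phi> ` B)"
  by (simp add: Der_eq ring_derivation_ext_der ext_der_phi)

end

theorem proposition2p5:
  fixes alg :: "'k::field \<Rightarrow> 'e::ring_1"
    and A :: "'e set" and \<Delta> :: "('e \<Rightarrow> 'e) set" and S :: "'e set"
    and \<phi> :: "'e \<Rightarrow> 'q::ring_1"
  assumes "K_algebra_map alg"
    and "subalgebra alg A"
    and "\<Delta> \<subseteq> Der alg A"
    and "regular_left_Ore UNIV S"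
    and "S \<subseteq> N_Delta_i \<Delta> 0"
    and "left_localization S \<phi>"
  shows "(inj \<phi> \<and> is_ring_hom \<phi>
       \<and> (\<forall>\<delta>\<in>\<Delta>. (\<exists>!D. \<forall>s\<in>S. \<forall>e. D (uinv (\<phi> s) * \<phi> e) = uinv (\<phi> s) * \<phi> (\<delta> e))
                 \<and> ext_der S \<phi> \<delta> \<in> Der (\<phi> \<circ> alg) (\<phi> ` A)
                 \<and> (\<forall>e. ext_der S \<phi> \<delta> (\<phi> e) = \<phi> (\<delta> e))))
       \<and> (subring (N_Delta \<Delta>) \<and> regular_left_Ore (N_Delta \<Delta>) S)
       \<and> N_Delta (ext_der S \<phi> ` \<Delta>) = loc_set S \<phi> (N_Delta \<Delta>)
       \<and> (\<forall>i. N_Delta_i (ext_der S \<phi> ` \<Delta>) i = loc_set S \<phi> (N_Delta_i \<Delta> i))"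
proof -
  interpret left_Ore_localization S \<phi>
    using assms(4,6) by (rule left_Ore_localization.intro)
  have derivations: "ring_derivation \<delta>" if "\<delta> \<in> \<Delta>" for \<delta>
    using assms(3) that by (auto simp: Der_eq)
  interpret derivation_set \<Delta>
    by (rule derivation_set.intro) (rule derivations)
  have Ore_der: "Ore_derivation S \<phi> \<delta>" if "\<delta> \<in> \<Delta>" for \<delta>
    using assms(5) that
    by (intro Ore_derivation.intro Ore_derivation_axioms.intro derivations left_Ore_localization_axioms)
      (auto simp: N_Delta_i_0)
  have lifts: "lifts (ext_der S \<phi> \<delta>) \<delta>" if "\<delta> \<in> \<Delta>" for \<delta>
    by (rule Ore_derivation.lifts_ext_der[OF Ore_der[OF that]])
  show ?thesis
  proof (intro conjI ballI allI)
    show "\<exists>!D. \<forall>s\<in>S. \<forall>e. D (frac s e) = frac s (\<delta> e)" if "\<delta> \<in> \<Delta>" for \<delta>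
      using Ore_derivation.ex1_lifts[OF Ore_der[OF that]] by (simp add: lifts_def)
    show "ext_der S \<phi> \<delta> \<in> Der (\<phi> \<circ> alg) (\<phi> ` A)" if "\<delta> \<in> \<Delta>" for \<delta>
      using Ore_derivation.ext_der_in_Der[OF Ore_der[OF that]] assms(3) that by blast
    show "ext_der S \<phi> \<delta> (\<phi> e) = \<phi> (\<delta> e)" if "\<delta> \<in> \<Delta>" for \<delta> e
      by (rule Ore_derivation.ext_der_phi[OF Ore_der[OF that]])
    show "N_Delta (ext_der S \<phi> ` \<Delta>) = loc_set S \<phi> (N_Delta \<Delta>)"
      by (rule N_Delta_lifts[OF lifts])
    show "N_Delta_i (ext_der S \<phi> ` \<Delta>) i = loc_set S \<phi> (N_Delta_i \<Delta> i)" for i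
      by (rule N_Delta_i_lifts[OF lifts])
  qed (fact inj_phi is_ring_hom_phi subring_N_Delta regular_left_Ore_N_Delta[OF assms(4,5)])+
qed

end
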